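(* Let $\mathbb{A}=(A,\backslash,/)$ be a residuation algebra. The following are equivalent: (1) The dual structure $\mathbb{A}^\delta_+$ is functional, i.e. $y\cdot z\in J^\infty(A^\delta)\cup\{\bot\}$ for all $y,z\in J^\infty(A^\delta)$. (2) For all $a,b,c\in A$ and all $x\in J^\infty(A^\delta)$ with $x\leq a$, there exists $a'\in A$ such that $x\leq a'$ and $a\backslash(b\vee c)\leq(a'\backslash b)\vee(a'\backslash c)$. (3) For all $x\in J^\infty(A^\delta)$, the map $x\backslash^\pi(\_):O(A^\delta)\to O(A^\delta)$ preserves binary joins, i.e. $x\backslash^\pi(o_1\vee o_2)=(x\backslash^\pi o_1)\vee(x\backslash^\pi o_2)$ for all $o_1,o_2\in O(A^\delta)$.
   Context: A residuation algebra is a structure $(A,\backslash,/)$ where $A$ is a bounded distributive lattice and $\backslash,/$ are binary operations on $A$ such that $\backslash$ preserves finite (including empty) meets in its second coordinate, $/$ preserves finite (including empty) meets in its first coordinate, and for all $a,b,c\in A$: $b\leq a\backslash c$ iff $a\leq c/b$. The canonical extension $A^\delta$ of $A$ is the complete lattice containing $A$ as a sublattice that is dense (every element is a join of meets and a meet of joins of elements of $A$) and compact (if $\bigwedge S\leq\bigvee T$ for $S,T\subseteq A$ then this holds for some finite subsets). Let $K(A^\delta)$ (resp. $O(A^\delta)$) be the set of meets (resp. joins) of subsets of $A$. The $\pi$-extension of $\backslash$ is: for $k\in K(A^\delta)$, $o\in O(A^\delta)$, $k\backslash^\pi o=\bigvee\{a\backslash b\mid a,b\in A,\ k\leq a,\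 b\leq o\}$, and for arbitrary $u,v\in A^\delta$, $u\backslash^\pi v=\bigwedge\{k\backslash^\pi o\mid k\in K(A^\delta), o\in O(A^\delta), k\leq u, v\leq o\}$; $/^\pi$ is defined symmetrically ($/$ being monotone in the first and antitone in the second coordinate). There is a binary operation $\cdot$ on $A^\delta$ such that for all $u,v,w\in A^\delta$: $v\leq u\backslash^\pi w$ iff $u\cdot v\leq w$ iff $u\leq w/^\pi v$. $J^\infty(A^\delta)$ is the set of completely join-irreducible elements of $A^\delta$ (those $x$ with $x=\bigvee S\Rightarrow x\in S$ for all $S\subseteq A^\delta$). The dual structure $\mathbb{A}^\delta_+$ is $(J^\infty(A^\delta),\geq,R)$ with $R(x,y,z)$ iff $x\leq y\cdot z$. *)

theory Defs
  imports Main
begin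

definition residuation_algebra ::
  "('a::{distrib_lattice,bounded_lattice} \<Rightarrow> 'a \<Rightarrow> 'a) \<Rightarrow> ('a \<Rightarrow> 'a \<Rightarrow> 'a) \<Rightarrow> bool" where
  "residuation_algebra ldiv rdiv \<longleftrightarrow>
     (\<forall>a. ldiv a top = top) \<and>
     (\<forall>a b c. ldiv a (inf b c) = inf (ldiv a b) (ldiv a c)) \<and>
     (\<forall>a. rdiv top a = top) \<and>
     (\<forall>a b c. rdiv (inf b c) a = inf (rdiv b a) (rdiv c a)) \<and>
     (\<forall>a b c. b \<le> ldiv a c \<longleftrightarrow> a \<le> rdiv c b)"

text \<open>Closed (K) and open (O) elements relative to the embedding e.\<close>
definition Kel :: "('a \<Rightarrow> 'c::complete_lattice) \<Rightarrow> 'c set" where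
  "Kel e = {Inf (e ` S) | S. True}"

definition Oel :: "('a \<Rightarrow> 'c::complete_lattice) \<Rightarrow> 'c set" where
  "Oel e = {Sup (e ` S) | S. True}"

definition canonical_extension ::
  "('a::{distrib_lattice,bounded_lattice} \<Rightarrow> 'c::complete_lattice) \<Rightarrow> bool" where
  "canonical_extension e \<longleftrightarrow>
     inj e \<and>
     (\<forall>a b. e (inf a b) = inf (e a) (e b)) \<and>
     (\<forall>a b. e (sup a b) = sup (e a) (e b)) \<and>
     e bot = bot \<and> e top = top \<and>
     (\<forall>u. (\<exists>X. X \<subseteq> Kel e \<and> u = Sup X) \<and> (\<exists>Y. Y \<subseteq> Oel e \<and> u = Inf Y)) \<and>
     (\<forall>S T. Inf (e ` S) \<le> Sup (e ` T) \<longrightarrow>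
        (\<exists>S' T'. finite S' \<and> S' \<subseteq> S \<and> finite T' \<and> T' \<subseteq> T \<and> Inf (e ` S') \<le> Sup (e ` T')))"

text \<open>pi-extension of the left residual (antitone in 1st, monotone in 2nd argument).\<close>
definition ldiv_KO :: "('a::order \<Rightarrow> 'c::complete_lattice) \<Rightarrow> ('a \<Rightarrow> 'a \<Rightarrow> 'a) \<Rightarrow> 'c \<Rightarrow> 'c \<Rightarrow> 'c" where
  "ldiv_KO e ldiv k p = Sup {e (ldiv a b) | a b. k \<le> e a \<and> e b \<le> p}"

definition ldiv_pi :: "('a::order \<Rightarrow> 'c::complete_lattice) \<Rightarrow> ('a \<Rightarrow> 'a \<Rightarrow> 'a) \<Rightarrow> 'c \<Rightarrow> 'c \<Rightarrow> 'c" where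
  "ldiv_pi e ldiv u v = Inf {ldiv_KO e ldiv k p | k p. k \<in> Kel e \<and> p \<in> Oel e \<and> k \<le> u \<and> v \<le> p}"

text \<open>pi-extension of the right residual (monotone in 1st, antitone in 2nd argument).\<close>
definition rdiv_OK :: "('a::order \<Rightarrow> 'c::complete_lattice) \<Rightarrow> ('a \<Rightarrow> 'a \<Rightarrow> 'a) \<Rightarrow> 'c \<Rightarrow> 'c \<Rightarrow> 'c" where
  "rdiv_OK e rdiv p k = Sup {e (rdiv b a) | b a. e b \<le> p \<and> k \<le> e a}"

definition rdiv_pi :: "('a::order \<Rightarrow> 'c::complete_lattice) \<Rightarrow> ('a \<Rightarrow> 'a \<Rightarrow> 'a) \<Rightarrow> 'c \<Rightarrow> 'c \<Rightarrow> 'c" where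
  "rdiv_pi e rdiv u v = Inf {rdiv_OK e rdiv p k | p k. p \<in> Oel e \<and> k \<in> Kel e \<and> u \<le> p \<and> k \<le> v}"

definition Jinf :: "'c::complete_lattice set" where
  "Jinf = {x. \<forall>S. x = Sup S \<longrightarrow> x \<in> S}"

end

theory Submission
  imports Defs
begin

(* Write x\o for the pi-extension of the left residual at a closed x and an open o. By
   compactness x\o is the directed join of the a\b with x <= e a and e b <= o, and every
   inequality between a closed and an open element is witnessed by an element of A. Hence (2)
   amounts to e (a\(b \<squnion> c)) <= x\(e b) \<squnion> x\(e c) whenever x <= e a, which is (3) for
   clopen arguments; (3) for arbitrary opens follows by splitting b <= o1 \<squnion> o2 as
   b <= j1 \<squnion> j2 with e j1 <= o1 and e j2 <= o2.
   For (3) => (1): y \<cdot> z is closed, and y \<cdot> z <= e a \<squnion> e b gives z <= y\(e a) \<squnion> y\(e b),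
   so the completely join-prime z lies below one of the two, i.e. y \<cdot> z is join-prime.
   For (1) => (2): by the prime filter theorem an element e w not below an open p lies above a
   completely join-irreducible z not below p; for p = x\(e b) \<squnion> x\(e c) the join-prime
   x \<cdot> z <= e b \<squnion> e c excludes such a z. *)

section \<open>Prime filters in distributive lattices\<close>

definition lattice_filter :: "'a::bounded_lattice set \<Rightarrow> bool" where
  "lattice_filter F \<longleftrightarrow>
     top \<in> F \<and> (\<forall>x\<in>F. \<forall>y\<in>F. inf x y \<in> F) \<and> (\<forall>x y. x \<in> F \<longrightarrow> x \<le> y \<longrightarrow> y \<in> F)"

definition lattice_ideal :: "'a::bounded_lattice set \<Rightarrow> bool" where
  "lattice_ideal I \<longleftrightarrow>
     bot \<in> I \<and> (\<forall>x\<in>I. \<forall>y\<in>I. sup x y \<in> I) \<and> (\<forall>x y. x \<in> I \<longrightarrow> y \<le> x \<longrightarrow> y \<in> I)"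

definition prime_filter :: "'a::bounded_lattice set \<Rightarrow> bool" where
  "prime_filter F \<longleftrightarrow> lattice_filter F \<and> (\<forall>x y. sup x y \<in> F \<longrightarrow> x \<in> F \<or> y \<in> F)"

lemma lattice_filterI:
  "top \<in> F \<Longrightarrow> (\<And>x y. x \<in> F \<Longrightarrow> y \<in> F \<Longrightarrow> inf x y \<in> F)
    \<Longrightarrow> (\<And>x y. x \<in> F \<Longrightarrow> x \<le> y \<Longrightarrow> y \<in> F) \<Longrightarrow> lattice_filter F"
  unfolding lattice_filter_def by blast

lemma lattice_filter_top: "lattice_filter F \<Longrightarrow> top \<in> F"
  and lattice_filter_inf: "lattice_filter F \<Longrightarrow> x \<in> F \<Longrightarrow> y \<in> F \<Longrightarrow> inf x y \<in> F"
  and lattice_filter_up: "lattice_filter F \<Longrightarrow> x \<in> F \<Longrightarrow> x \<le> y \<Longrightarrow> y \<in> F"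
  unfolding lattice_filter_def by blast+

lemma lattice_ideal_down: "lattice_ideal I \<Longrightarrow> x \<in> I \<Longrightarrow> y \<le> x \<Longrightarrow> y \<in> I"
  and lattice_ideal_sup: "lattice_ideal I \<Longrightarrow> x \<in> I \<Longrightarrow> y \<in> I \<Longrightarrow> sup x y \<in> I"
  unfolding lattice_ideal_def by blast+

lemma lattice_filter_UNIV: "lattice_filter UNIV"
  by (rule lattice_filterI) simp_all

lemma lattice_filter_principal: "lattice_filter {y. w \<le> y}"
  by (rule lattice_filterI) auto

lemma lattice_filter_adjoin:
  assumes F: "lattice_filter F"
  shows "lattice_filter {z. \<exists>m\<in>F. inf m x \<le> z}"
proof (rule lattice_filterI)
  show "top \<in> {z. \<exists>m\<in>F. inf m x \<le> z}"
    using lattice_filter_top[OF F] by auto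
next
  fix y z assume "y \<in> {z. \<exists>m\<in>F. inf m x \<le> z}" "z \<in> {z. \<exists>m\<in>F. inf m x \<le> z}"
  then obtain m1 m2 where m: "m1 \<in> F" "m2 \<in> F" "inf m1 x \<le> y" "inf m2 x \<le> z" by blast
  then have "inf (inf m1 m2) x \<le> inf y z"
    by (meson inf_le1 inf_le2 inf_mono le_inf_iff order_trans)
  then show "inf y z \<in> {z. \<exists>m\<in>F. inf m x \<le> z}"
    using lattice_filter_inf[OF F m(1,2)] by blast
next
  fix y z assume "y \<in> {z. \<exists>m\<in>F. inf m x \<le> z}" "y \<le> z"
  then show "z \<in> {z. \<exists>m\<in>F. inf m x \<le> z}" by (blast dest: order_trans)
qed

lemma maximal_filter_prime:
  fixes M I :: "'a::{distrib_lattice,bounded_lattice} set"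
  assumes M: "lattice_filter M" and I: "lattice_ideal I" and disj: "M \<inter> I = {}"
    and maximal: "\<And>G. lattice_filter G \<Longrightarrow> G \<inter> I = {} \<Longrightarrow> M \<subseteq> G \<Longrightarrow> G = M"
  shows "prime_filter M"
proof -
  have meet_in_ideal: "\<exists>m\<in>M. inf m x \<in> I" if "x \<notin> M" for x
  proof (rule ccontr)
    assume none: "\<not> (\<exists>m\<in>M. inf m x \<in> I)"
    define G where "G = {z. \<exists>m\<in>M. inf m x \<le> z}"
    have "G \<inter> I = {}"
      using none lattice_ideal_down[OF I] unfolding G_def by blast
    moreover have "M \<subseteq> G"
      unfolding G_def by (auto intro: le_infI1)
    ultimately have "G = M"
      using maximal lattice_filter_adjoin[OF M] unfolding G_def by blast
    moreover have "x \<in> G"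
      using lattice_filter_top[OF M] unfolding G_def by force
    ultimately show False using that by blast
  qed
  have "x \<in> M \<or> y \<in> M" if xy: "sup x y \<in> M" for x y
  proof (rule ccontr)
    assume "\<not> (x \<in> M \<or> y \<in> M)"
    then obtain m1 m2 where m: "m1 \<in> M" "m2 \<in> M" "inf m1 x \<in> I" "inf m2 y \<in> I"
      using meet_in_ideal by blast
    define m where "m = inf (inf m1 m2) (sup x y)"
    have "m \<in> M"
      unfolding m_def by (intro lattice_filter_inf[OF M] m xy)
    have "m = sup (inf (inf m1 m2) x) (inf (inf m1 m2) y)"
      unfolding m_def by (simp add: inf_sup_distrib1)
    also have "\<dots> \<le> sup (inf m1 x) (inf m2 y)"
      by (intro sup_mono inf_mono) auto
    finally have "m \<in> I"
      using lattice_ideal_down[OF I lattice_ideal_sup[OF I m(3,4)]] by blast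
    then show False using \<open>m \<in> M\<close> disj by blast
  qed
  then show ?thesis using M unfolding prime_filter_def by blast
qed

theorem prime_filter_separation:
  fixes I :: "'a::{distrib_lattice,bounded_lattice} set"
  assumes I: "lattice_ideal I" and w: "w \<notin> I"
  shows "\<exists>F. prime_filter F \<and> w \<in> F \<and> F \<inter> I = {}"
proof -
  define Fam where "Fam = {F. lattice_filter F \<and> w \<in> F \<and> F \<inter> I = {}}"
  have "{y. w \<le> y} \<inter> I = {}"
    using w lattice_ideal_down[OF I] by blast
  then have "{y. w \<le> y} \<in> Fam"
    unfolding Fam_def using lattice_filter_principal by blast
  moreover have "\<Union>C \<in> Fam" if "C \<noteq> {}" "subset.chain Fam C" for C
  proof -
    have C: "C \<subseteq> Fam" and chain: "\<forall>A\<in>C. \<forall>B\<in>C. A \<subseteq> B \<or> B \<subseteq> A"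
      using that(2) unfolding subset_chain_def by auto
    have filters: "lattice_filter A" if "A \<in> C" for A
      using C that unfolding Fam_def by blast
    have "lattice_filter (\<Union>C)"
    proof (rule lattice_filterI)
      show "top \<in> \<Union>C"
        using \<open>C \<noteq> {}\<close> filters lattice_filter_top by blast
    next
      fix x y assume "x \<in> \<Union>C" "y \<in> \<Union>C"
      then obtain A B where "A \<in> C" "B \<in> C" "x \<in> A" "y \<in> B" by blast
      with chain have "\<exists>D\<in>C. x \<in> D \<and> y \<in> D" by blast
      then show "inf x y \<in> \<Union>C" using filters lattice_filter_inf by blast
    next
      fix x y assume "x \<in> \<Union>C" "x \<le> y"
      then show "y \<in> \<Union>C" using filters lattice_filter_up by blast
    qed
    moreover have "w \<in> \<Union>C" "\<Union>C \<inter> I = {}"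
      using \<open>C \<noteq> {}\<close> C unfolding Fam_def by blast+
    ultimately show ?thesis
      unfolding Fam_def by blast
  qed
  ultimately obtain M where "M \<in> Fam" and maximal: "\<forall>G\<in>Fam. M \<subseteq> G \<longrightarrow> G = M"
    using subset_Zorn_nonempty[of Fam] by blast
  then have M: "lattice_filter M" "w \<in> M" "M \<inter> I = {}"
    unfolding Fam_def by auto
  have "prime_filter M"
  proof (rule maximal_filter_prime[OF M(1) I M(3)])
    fix G assume "lattice_filter G" "G \<inter> I = {}" "M \<subseteq> G"
    then show "G = M" using maximal M(2) unfolding Fam_def by blast
  qed
  then show ?thesis using M by blast
qed

section \<open>Canonical extensions\<close>

locale canonical_ext =
  fixes e :: "'a::{distrib_lattice,bounded_lattice} \<Rightarrow> 'c::complete_lattice"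
  assumes canonical: "canonical_extension e"
begin

lemma e_inf [simp]: "e (inf a b) = inf (e a) (e b)"
  and e_sup [simp]: "e (sup a b) = sup (e a) (e b)"
  and e_bot [simp]: "e bot = bot"
  and e_top [simp]: "e top = top"
  and inj_e: "inj e"
  using canonical unfolding canonical_extension_def by blast+

lemma dense_Kel: "\<exists>X. X \<subseteq> Kel e \<and> u = Sup X"
  and dense_Oel: "\<exists>Y. Y \<subseteq> Oel e \<and> u = Inf Y"
  using canonical unfolding canonical_extension_def by blast+

lemma compactness:
  "Inf (e ` S) \<le> Sup (e ` T) \<Longrightarrow>
     \<exists>S' T'. finite S' \<and> S' \<subseteq> S \<and> finite T' \<and> T' \<subseteq> T \<and> Inf (e ` S') \<le> Sup (e ` T')"
  using canonical unfolding canonical_extension_def by blast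

lemma e_le_iff [simp]: "e a \<le> e b \<longleftrightarrow> a \<le> b"
proof
  assume "e a \<le> e b"
  then have "e (inf a b) = e a" by (simp add: inf.absorb1)
  then show "a \<le> b" using inj_e by (metis inf.orderI injD)
qed (metis e_inf inf.orderE inf.orderI)

lemma e_Kel [simp]: "e a \<in> Kel e"
  and e_Oel [simp]: "e a \<in> Oel e"
  unfolding Kel_def Oel_def by (auto intro!: exI[of _ "{a}"])

lemma Inf_e_Kel [simp]: "Inf (e ` S) \<in> Kel e"
  and Sup_e_Oel [simp]: "Sup (e ` T) \<in> Oel e"
  unfolding Kel_def Oel_def by blast+

lemma KelE: "k \<in> Kel e \<Longrightarrow> (\<And>S. k = Inf (e ` S) \<Longrightarrow> P) \<Longrightarrow> P"
  and OelE: "p \<in> Oel e \<Longrightarrow> (\<And>T. p = Sup (e ` T) \<Longrightarrow> P) \<Longrightarrow> P"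
  unfolding Kel_def Oel_def by blast+

lemma sup_Oel [simp]: "p \<in> Oel e \<Longrightarrow> q \<in> Oel e \<Longrightarrow> sup p q \<in> Oel e"
  by (auto elim!: OelE simp flip: Sup_union_distrib image_Un)

lemma e_Sup_finite: "finite T \<Longrightarrow> \<exists>c. e c = Sup (e ` T)"
proof (induction T rule: finite_induct)
  case (insert t T)
  then obtain c where "e c = Sup (e ` T)" by blast
  then show ?case by (intro exI[of _ "sup t c"]) simp
qed (auto intro: exI[of _ bot])

lemma e_Inf_finite_in_filter:
  assumes F: "lattice_filter F"
  shows "finite S \<Longrightarrow> S \<subseteq> F \<Longrightarrow> \<exists>m\<in>F. e m = Inf (e ` S)"
proof (induction S rule: finite_induct)
  case empty
  then show ?case using lattice_filter_top[OF F] by (intro bexI[of _ top]) simp_all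
next
  case (insert s S)
  then obtain m where "m \<in> F" "e m = Inf (e ` S)" by blast
  then show ?case
    using insert.prems lattice_filter_inf[OF F] by (intro bexI[of _ "inf s m"]) simp_all
qed

lemma e_Inf_finite: "finite S \<Longrightarrow> \<exists>m. e m = Inf (e ` S)"
  using e_Inf_finite_in_filter[OF lattice_filter_UNIV] by blast

lemma compact_Oel:
  assumes "p \<in> Oel e" "Inf (e ` S) \<le> p"
  shows "\<exists>S'. finite S' \<and> S' \<subseteq> S \<and> Inf (e ` S') \<le> p"
proof -
  obtain T where T: "p = Sup (e ` T)" using assms(1) by (rule OelE)
  then obtain S' T' where "finite S'" "S' \<subseteq> S" "T' \<subseteq> T" "Inf (e ` S') \<le> Sup (e ` T')"
    using compactness assms(2) by metis
  moreover have "Sup (e ` T') \<le> p" unfolding T using \<open>T' \<subseteq> T\<close> by (intro Sup_subset_mono image_mono)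
  ultimately show ?thesis by (meson order_trans)
qed

lemma compact_Kel:
  assumes "k \<in> Kel e" "k \<le> Sup (e ` T)"
  shows "\<exists>T'. finite T' \<and> T' \<subseteq> T \<and> k \<le> Sup (e ` T')"
proof -
  obtain S where S: "k = Inf (e ` S)" using assms(1) by (rule KelE)
  then obtain S' T' where "S' \<subseteq> S" "finite T'" "T' \<subseteq> T" "Inf (e ` S') \<le> Sup (e ` T')"
    using compactness assms(2) by metis
  moreover have "k \<le> Inf (e ` S')" unfolding S using \<open>S' \<subseteq> S\<close> by (intro Inf_superset_mono image_mono)
  ultimately show ?thesis by (meson order_trans)
qed

lemma filter_Inf_le_Oel:
  assumes "lattice_filter F" "p \<in> Oel e" "Inf (e ` F) \<le> p"
  shows "\<exists>m\<in>F. e m \<le> p"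
proof -
  obtain S where "finite S" "S \<subseteq> F" "Inf (e ` S) \<le> p"
    using compact_Oel assms(2,3) by blast
  then show ?thesis using e_Inf_finite_in_filter[OF assms(1)] by metis
qed

lemma Kel_le_sup_Oel_split:
  assumes k: "k \<in> Kel e" and p: "p \<in> Oel e" and q: "q \<in> Oel e" and le: "k \<le> sup p q"
  shows "\<exists>c d. k \<le> sup (e c) (e d) \<and> e c \<le> p \<and> e d \<le> q"
proof -
  obtain T1 T2 where T: "p = Sup (e ` T1)" "q = Sup (e ` T2)" using p q by (blast elim: OelE)
  have "k \<le> Sup (e ` (T1 \<union> T2))" using le by (simp add: T image_Un Sup_union_distrib)
  then obtain T' where T': "finite T'" "T' \<subseteq> T1 \<union> T2" "k \<le> Sup (e ` T')"
    using compact_Kel[OF k] by blast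
  obtain c d where c: "e c = Sup (e ` (T' \<inter> T1))" and d: "e d = Sup (e ` (T' - T1))"
    using e_Sup_finite T'(1) by (metis finite_Diff finite_Int)
  have "Sup (e ` T') = sup (e c) (e d)"
    by (simp add: c d flip: Sup_union_distrib image_Un) (metis Int_Diff_Un)
  moreover have "e c \<le> p" "e d \<le> q"
    unfolding c d T using T'(2) by (auto intro!: Sup_subset_mono)
  ultimately show ?thesis using T'(3) by auto
qed

lemma Oel_interpolants_Kel:
  assumes "\<And>p. p \<in> Oel e \<Longrightarrow> u \<le> p \<Longrightarrow> \<exists>b. u \<le> e b \<and> e b \<le> p"
  shows "u \<in> Kel e"
proof -
  obtain Y where Y: "Y \<subseteq> Oel e" "u = Inf Y" using dense_Oel by blast
  have "Inf (e ` {b. u \<le> e b}) \<le> p" if "p \<in> Y" for p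
  proof -
    have "p \<in> Oel e" "u \<le> p" using Y that by (auto simp: Inf_lower)
    then obtain b where "u \<le> e b" "e b \<le> p" using assms by blast
    then show ?thesis by (meson INF_lower2 mem_Collect_eq)
  qed
  then have "u = Inf (e ` {b. u \<le> e b})"
    using Y(2) by (intro antisym) (auto intro: Inf_greatest)
  then show ?thesis by (metis Inf_e_Kel)
qed

lemma Oel_separation:
  assumes "\<not> x \<le> u"
  shows "\<exists>T. u \<le> Sup (e ` T) \<and> \<not> x \<le> Sup (e ` T)"
proof -
  obtain Y where Y: "Y \<subseteq> Oel e" "u = Inf Y" using dense_Oel by blast
  then obtain p where "p \<in> Y" "\<not> x \<le> p" using assms by (meson le_Inf_iff)
  then show ?thesis using Y by (metis Inf_lower OelE subsetD)
qed

lemma inf_Kel_le_Oel: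
  assumes k: "k \<in> Kel e" and p: "p \<in> Oel e" and le: "inf k (e a) \<le> p"
  shows "\<exists>z. k \<le> e z \<and> e (inf z a) \<le> p"
proof -
  obtain S where S: "k = Inf (e ` S)" using k by (rule KelE)
  have "Inf (e ` insert a S) \<le> p" using le by (simp add: S inf_commute)
  then obtain S' where S': "finite S'" "S' \<subseteq> insert a S" "Inf (e ` S') \<le> p"
    using compact_Oel[OF p] by blast
  obtain z where z: "e z = Inf (e ` (S' - {a}))" using e_Inf_finite S'(1) by blast
  have "k \<le> e z" unfolding S z using S'(2) by (intro Inf_superset_mono image_mono) blast
  moreover have "e (inf z a) = Inf (e ` insert a (S' - {a}))"
    by (simp only: image_insert Inf_insert z e_inf inf_commute)
  moreover have "\<dots> \<le> Inf (e ` S')" by (intro Inf_superset_mono image_mono) blast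
  ultimately show ?thesis using S'(3) by (metis order_trans)
qed

lemma inf_Kel_sup_e_distrib:
  assumes k: "k \<in> Kel e"
  shows "inf k (sup (e a) (e b)) \<le> sup (inf k (e a)) (inf k (e b))"
proof -
  obtain Y where Y: "Y \<subseteq> Oel e" "sup (inf k (e a)) (inf k (e b)) = Inf Y" using dense_Oel by blast
  have "inf k (sup (e a) (e b)) \<le> p" if "p \<in> Y" for p
  proof -
    have p: "p \<in> Oel e" and "sup (inf k (e a)) (inf k (e b)) \<le> p"
      using Y that by (auto simp: Inf_lower)
    then obtain z1 z2 where z: "k \<le> e z1" "e (inf z1 a) \<le> p" "k \<le> e z2" "e (inf z2 b) \<le> p"
      using inf_Kel_le_Oel[OF k p] le_sup_iff by metis
    have "inf k (sup (e a) (e b)) \<le> e (inf (inf z1 z2) (sup a b))"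
      using z(1,3) by (simp add: le_infI1 inf_mono)
    also have "\<dots> = sup (e (inf (inf z1 z2) a)) (e (inf (inf z1 z2) b))"
      by (simp only: inf_sup_distrib1 e_sup)
    also have "\<dots> \<le> sup (e (inf z1 a)) (e (inf z2 b))"
      by (simp only: e_le_iff sup_mono inf_mono inf_le1 inf_le2 order_refl)
    also have "\<dots> \<le> p" using z(2,4) by simp
    finally show ?thesis .
  qed
  then show ?thesis using Y(2) by (simp add: le_Inf_iff)
qed

lemma Jinf_not_bot: "x \<in> Jinf \<Longrightarrow> x \<noteq> bot"
  unfolding Jinf_def by force

lemma Jinf_Kel: "x \<in> Jinf \<Longrightarrow> x \<in> Kel e"
  using dense_Kel[of x] unfolding Jinf_def by blast

lemma Jinf_le_sup_e:
  assumes x: "x \<in> Jinf" and le: "x \<le> sup (e a) (e b)"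
  shows "x \<le> e a \<or> x \<le> e b"
proof -
  have "x = inf x (sup (e a) (e b))" using le by (simp add: inf.absorb1)
  also have "\<dots> \<le> sup (inf x (e a)) (inf x (e b))" by (rule inf_Kel_sup_e_distrib[OF Jinf_Kel[OF x]])
  finally have "x = Sup {inf x (e a), inf x (e b)}" by (simp add: antisym)
  then have "x = inf x (e a) \<or> x = inf x (e b)" using x unfolding Jinf_def by blast
  then show ?thesis by (metis inf.cobounded2)
qed

lemma prime_le_Sup_e_finite:
  assumes "x \<noteq> bot" and prime: "\<And>a b. x \<le> sup (e a) (e b) \<Longrightarrow> x \<le> e a \<or> x \<le> e b"
  shows "finite T \<Longrightarrow> x \<le> Sup (e ` T) \<Longrightarrow> \<exists>t\<in>T. x \<le> e t"
proof (induction T rule: finite_induct)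
  case empty
  then show ?case using assms(1) by (simp add: bot_unique)
next
  case (insert t T)
  obtain c where c: "e c = Sup (e ` T)" using e_Sup_finite insert(1) by blast
  then have "x \<le> e t \<or> x \<le> e c" using prime insert(4) by (metis image_insert Sup_insert)
  then show ?case using insert.IH c by auto
qed

lemma prime_Kel_le_Sup_e:
  assumes "x \<in> Kel e" "x \<noteq> bot" "\<And>a b. x \<le> sup (e a) (e b) \<Longrightarrow> x \<le> e a \<or> x \<le> e b"
    and "x \<le> Sup (e ` T)"
  shows "\<exists>t\<in>T. x \<le> e t"
  using compact_Kel[OF assms(1,4)] prime_le_Sup_e_finite[OF assms(2,3)] by blast

lemma Jinf_iff:
  "x \<in> Jinf \<longleftrightarrow>
     x \<in> Kel e \<and> x \<noteq> bot \<and> (\<forall>a b. x \<le> sup (e a) (e b) \<longrightarrow> x \<le> e a \<or> x \<le> e b)"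
proof
  assume "x \<in> Jinf"
  then show "x \<in> Kel e \<and> x \<noteq> bot \<and> (\<forall>a b. x \<le> sup (e a) (e b) \<longrightarrow> x \<le> e a \<or> x \<le> e b)"
    using Jinf_Kel Jinf_not_bot Jinf_le_sup_e by blast
next
  assume "x \<in> Kel e \<and> x \<noteq> bot \<and> (\<forall>a b. x \<le> sup (e a) (e b) \<longrightarrow> x \<le> e a \<or> x \<le> e b)"
  then have x: "x \<in> Kel e" "x \<noteq> bot" "\<And>a b. x \<le> sup (e a) (e b) \<Longrightarrow> x \<le> e a \<or> x \<le> e b"
    by blast+
  show "x \<in> Jinf" unfolding Jinf_def
  proof (intro CollectI allI impI)
    fix S assume S: "x = Sup S"
    show "x \<in> S"
    proof (rule ccontr)
      assume "x \<notin> S"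
      have "\<forall>s\<in>S. \<exists>T. s \<le> Sup (e ` T) \<and> \<not> x \<le> Sup (e ` T)"
      proof
        fix s assume "s \<in> S"
        then have "\<not> x \<le> s" using S \<open>x \<notin> S\<close> by (metis Sup_upper antisym)
        then show "\<exists>T. s \<le> Sup (e ` T) \<and> \<not> x \<le> Sup (e ` T)" by (rule Oel_separation)
      qed
      then obtain T where T: "\<And>s. s \<in> S \<Longrightarrow> s \<le> Sup (e ` T s) \<and> \<not> x \<le> Sup (e ` T s)"
        by (metis bchoice)
      have "s \<le> Sup (e ` \<Union>(T ` S))" if "s \<in> S" for s
      proof -
        have "Sup (e ` T s) \<le> Sup (e ` \<Union>(T ` S))"
          using that by (intro Sup_subset_mono image_mono) blast
        then show ?thesis using T[OF that] by (blast intro: order_trans)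
      qed
      then have "x \<le> Sup (e ` \<Union>(T ` S))"
        unfolding S by (rule Sup_least)
      then obtain t where "t \<in> \<Union>(T ` S)" "x \<le> e t"
        using prime_Kel_le_Sup_e[OF x] by blast
      then obtain s where "s \<in> S" "x \<le> e t" "e t \<le> Sup (e ` T s)"
        by (auto intro: Sup_upper)
      then show False using T by (blast intro: order_trans)
    qed
  qed
qed

lemma Jinf_le_sup_Oel:
  assumes x: "x \<in> Jinf" and "p \<in> Oel e" "q \<in> Oel e" "x \<le> sup p q"
  shows "x \<le> p \<or> x \<le> q"
proof -
  obtain c d where "x \<le> sup (e c) (e d)" "e c \<le> p" "e d \<le> q"
    using Kel_le_sup_Oel_split[OF Jinf_Kel[OF x] assms(2-4)] by blast
  then show ?thesis using Jinf_le_sup_e[OF x] by (meson order_trans)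
qed

lemma Jinf_separation:
  assumes p: "p \<in> Oel e" and "\<not> e w \<le> p"
  shows "\<exists>z\<in>Jinf. z \<le> e w \<and> \<not> z \<le> p"
proof -
  have "lattice_ideal {t. e t \<le> p}"
    unfolding lattice_ideal_def by simp (meson e_le_iff order_trans)
  then obtain F where F: "prime_filter F" "w \<in> F" "F \<inter> {t. e t \<le> p} = {}"
    using prime_filter_separation assms(2) by blast
  then have filter: "lattice_filter F" unfolding prime_filter_def by blast
  define z where "z = Inf (e ` F)"
  have z_le: "\<exists>m\<in>F. e m \<le> q" if "q \<in> Oel e" "z \<le> q" for q
    using filter_Inf_le_Oel[OF filter that(1)] that(2) unfolding z_def by blast
  have "z \<le> e w" unfolding z_def using F(2) by (simp add: INF_lower)
  moreover have "\<not> z \<le> p" using z_le[OF p] F(3) by blast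
  moreover have "z \<in> Jinf"
    unfolding Jinf_iff
  proof (intro conjI allI impI)
    show "z \<in> Kel e" "z \<noteq> bot" unfolding z_def using \<open>\<not> z \<le> p\<close> by (auto simp: z_def)
    fix a b assume "z \<le> sup (e a) (e b)"
    then have "z \<le> e (sup a b)" by simp
    then obtain m where "m \<in> F" "m \<le> sup a b" using z_le[OF e_Oel] e_le_iff by blast
    then have "a \<in> F \<or> b \<in> F"
      using F(1) lattice_filter_up[OF filter] unfolding prime_filter_def by blast
    then show "z \<le> e a \<or> z \<le> e b" unfolding z_def by (auto intro: INF_lower)
  qed
  ultimately show ?thesis by blast
qed

end

section \<open>The pi-extension of the left residual\<close>

lemma residuation_algebra_ldiv_mono:
  assumes "residuation_algebra ldiv rdiv" "b \<le> c"
  shows "ldiv a b \<le> ldiv a c"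
  using assms unfolding residuation_algebra_def by (metis inf.absorb_iff1 inf.cobounded2)

lemma residuation_algebra_ldiv_antimono:
  assumes "residuation_algebra ldiv rdiv" "a \<le> a'"
  shows "ldiv a' c \<le> ldiv a c"
proof -
  have "a' \<le> rdiv c (ldiv a' c)" using assms(1) unfolding residuation_algebra_def by blast
  then show ?thesis using assms unfolding residuation_algebra_def by (meson order_trans)
qed

lemma ldiv_KO_antimono: "k \<le> k' \<Longrightarrow> ldiv_KO e ldiv k' p \<le> ldiv_KO e ldiv k p"
  and ldiv_KO_mono: "p \<le> p' \<Longrightarrow> ldiv_KO e ldiv k p \<le> ldiv_KO e ldiv k p'"
  unfolding ldiv_KO_def by (auto intro!: Sup_subset_mono intro: order_trans)

lemma ldiv_pi_mono: "v \<le> v' \<Longrightarrow> ldiv_pi e ldiv u v \<le> ldiv_pi e ldiv u v'"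
  unfolding ldiv_pi_def by (auto intro!: Inf_superset_mono intro: order_trans)

lemma ldiv_pi_Kel_Oel:
  assumes "k \<in> Kel e" "p \<in> Oel e"
  shows "ldiv_pi e ldiv k p = Sup (e ` {ldiv a b |a b. k \<le> e a \<and> e b \<le> p})"
proof -
  have "ldiv_pi e ldiv k p = ldiv_KO e ldiv k p"
    unfolding ldiv_pi_def
  proof (rule antisym)
    show "Inf {ldiv_KO e ldiv k' p' |k' p'. k' \<in> Kel e \<and> p' \<in> Oel e \<and> k' \<le> k \<and> p \<le> p'}
        \<le> ldiv_KO e ldiv k p"
      using assms by (blast intro: Inf_lower)
  next
    show "ldiv_KO e ldiv k p
        \<le> Inf {ldiv_KO e ldiv k' p' |k' p'. k' \<in> Kel e \<and> p' \<in> Oel e \<and> k' \<le> k \<and> p \<le> p'}"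
      by (blast intro: Inf_greatest ldiv_KO_antimono ldiv_KO_mono order_trans)
  qed
  also have "\<dots> = Sup (e ` {ldiv a b |a b. k \<le> e a \<and> e b \<le> p})"
    unfolding ldiv_KO_def by (rule arg_cong[where f = Sup]) blast
  finally show ?thesis .
qed

lemma ldiv_pi_Kel_Oel_upper:
  "k \<in> Kel e \<Longrightarrow> p \<in> Oel e \<Longrightarrow> k \<le> e a \<Longrightarrow> e b \<le> p \<Longrightarrow> e (ldiv a b) \<le> ldiv_pi e ldiv k p"
  unfolding ldiv_pi_Kel_Oel by (blast intro: Sup_upper)

lemma ldiv_pi_Kel_Oel_in_Oel: "k \<in> Kel e \<Longrightarrow> p \<in> Oel e \<Longrightarrow> ldiv_pi e ldiv k p \<in> Oel e"
  by (subst ldiv_pi_Kel_Oel) (auto simp: Oel_def)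

section \<open>Functional duals of residuation algebras\<close>

definition dual_functional :: "('c::complete_lattice \<Rightarrow> 'c \<Rightarrow> 'c) \<Rightarrow> bool" where
  "dual_functional dot \<longleftrightarrow> (\<forall>y\<in>Jinf. \<forall>z\<in>Jinf. dot y z \<in> Jinf \<union> {bot})"

definition ldiv_splits_joins :: "('a::lattice \<Rightarrow> 'c::complete_lattice) \<Rightarrow> ('a \<Rightarrow> 'a \<Rightarrow> 'a) \<Rightarrow> bool" where
  "ldiv_splits_joins e ldiv \<longleftrightarrow>
     (\<forall>a b c x. x \<in> Jinf \<and> x \<le> e a \<longrightarrow>
        (\<exists>a'. x \<le> e a' \<and> ldiv a (sup b c) \<le> sup (ldiv a' b) (ldiv a' c)))"

definition ldiv_pi_preserves_Oel_joins ::
  "('a::order \<Rightarrow> 'c::complete_lattice) \<Rightarrow> ('a \<Rightarrow> 'a \<Rightarrow> 'a) \<Rightarrow> bool" where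
  "ldiv_pi_preserves_Oel_joins e ldiv \<longleftrightarrow>
     (\<forall>x\<in>Jinf. \<forall>o1\<in>Oel e. \<forall>o2\<in>Oel e.
        ldiv_pi e ldiv x (sup o1 o2) = sup (ldiv_pi e ldiv x o1) (ldiv_pi e ldiv x o2))"

locale residuated_canonical_ext = canonical_ext e
  for e :: "'a::{distrib_lattice,bounded_lattice} \<Rightarrow> 'c::complete_lattice" +
  fixes ldiv rdiv :: "'a \<Rightarrow> 'a \<Rightarrow> 'a" and dot :: "'c \<Rightarrow> 'c \<Rightarrow> 'c"
  assumes residuation: "residuation_algebra ldiv rdiv"
    and dot_residuals: "\<And>u v w. (v \<le> ldiv_pi e ldiv u w \<longleftrightarrow> dot u v \<le> w)
                                \<and> (dot u v \<le> w \<longleftrightarrow> u \<le> rdiv_pi e rdiv w v)"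
begin

lemma ldiv_mono: "b \<le> c \<Longrightarrow> ldiv a b \<le> ldiv a c"
  and ldiv_antimono: "a \<le> a' \<Longrightarrow> ldiv a' c \<le> ldiv a c"
  by (fact residuation_algebra_ldiv_mono[OF residuation]
      residuation_algebra_ldiv_antimono[OF residuation])+

lemma ldiv_generators_directed:
  "finite W \<Longrightarrow> W \<subseteq> {ldiv a b |a b. y \<le> e a \<and> e b \<le> p}
    \<Longrightarrow> \<exists>a b. y \<le> e a \<and> e b \<le> p \<and> (\<forall>w\<in>W. w \<le> ldiv a b)"
proof (induction W rule: finite_induct)
  case empty
  show ?case by (intro exI[of _ top] exI[of _ bot]) simp
next
  case (insert w W)
  then obtain a b where ab: "y \<le> e a" "e b \<le> p" "\<forall>w\<in>W. w \<le> ldiv a b" by blast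
  obtain a1 b1 where w: "w = ldiv a1 b1" "y \<le> e a1" "e b1 \<le> p" using insert.prems by blast
  have "ldiv a b \<le> ldiv (inf a a1) (sup b b1)" "ldiv a1 b1 \<le> ldiv (inf a a1) (sup b b1)"
    by (meson ldiv_antimono ldiv_mono inf_le1 inf_le2 sup_ge1 sup_ge2 order_trans)+
  then have "\<forall>v\<in>insert w W. v \<le> ldiv (inf a a1) (sup b b1)"
    using ab(3) w(1) by (blast intro: order_trans)
  moreover have "y \<le> e (inf a a1)" "e (sup b b1) \<le> p" using ab w by simp_all
  ultimately show ?case by blast
qed

lemma Kel_le_ldiv_pi:
  assumes y: "y \<in> Kel e" and p: "p \<in> Oel e" and k: "k \<in> Kel e" and le: "k \<le> ldiv_pi e ldiv y p"
  shows "\<exists>a b. y \<le> e a \<and> e b \<le> p \<and> k \<le> e (ldiv a b)"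
proof -
  define W where "W = {ldiv a b |a b. y \<le> e a \<and> e b \<le> p}"
  obtain W' where W': "finite W'" "W' \<subseteq> W" "k \<le> Sup (e ` W')"
    using compact_Kel[OF k] le unfolding ldiv_pi_Kel_Oel[OF y p] W_def by blast
  obtain a b where ab: "y \<le> e a" "e b \<le> p" "\<forall>w\<in>W'. w \<le> ldiv a b"
    using ldiv_generators_directed W'(1,2) unfolding W_def by blast
  have "Sup (e ` W') \<le> e (ldiv a b)" using ab(3) by (auto intro: Sup_least)
  then show ?thesis using ab(1,2) W'(3) by (blast intro: order_trans)
qed

lemma e_le_sup_ldiv_pi:
  assumes x: "x \<in> Kel e"
    and le: "e w \<le> sup (ldiv_pi e ldiv x (e b)) (ldiv_pi e ldiv x (e c))"
  shows "\<exists>a'. x \<le> e a' \<and> w \<le> sup (ldiv a' b) (ldiv a' c)"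
proof -
  obtain j1 j2 where j: "e w \<le> sup (e j1) (e j2)"
      "e j1 \<le> ldiv_pi e ldiv x (e b)" "e j2 \<le> ldiv_pi e ldiv x (e c)"
    using Kel_le_sup_Oel_split[OF e_Kel _ _ le] ldiv_pi_Kel_Oel_in_Oel[OF x e_Oel] by blast
  obtain a1 b1 where 1: "x \<le> e a1" "b1 \<le> b" "j1 \<le> ldiv a1 b1"
    using Kel_le_ldiv_pi[OF x e_Oel e_Kel j(2)] by auto
  obtain a2 c2 where 2: "x \<le> e a2" "c2 \<le> c" "j2 \<le> ldiv a2 c2"
    using Kel_le_ldiv_pi[OF x e_Oel e_Kel j(3)] by auto
  have "j1 \<le> ldiv (inf a1 a2) b" "j2 \<le> ldiv (inf a1 a2) c"
    using 1 2 by (meson ldiv_antimono ldiv_mono inf_le1 inf_le2 order_trans)+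
  moreover have "w \<le> sup j1 j2" using j(1) by (simp flip: e_sup)
  ultimately have "w \<le> sup (ldiv (inf a1 a2) b) (ldiv (inf a1 a2) c)"
    by (meson order_trans sup_mono)
  moreover have "x \<le> e (inf a1 a2)" using 1 2 by simp
  ultimately show ?thesis by blast
qed

lemma dot_le_iff: "dot u v \<le> w \<longleftrightarrow> v \<le> ldiv_pi e ldiv u w"
  using dot_residuals by blast

lemma dot_mono_left:
  assumes "u \<le> u'"
  shows "dot u v \<le> dot u' v"
proof -
  have "u' \<le> rdiv_pi e rdiv (dot u' v) v" using dot_residuals by blast
  then show ?thesis using assms dot_residuals by (meson order_trans)
qed

lemma dot_Kel:
  assumes y: "y \<in> Kel e" and z: "z \<in> Kel e"
  shows "dot y z \<in> Kel e"
proof (rule Oel_interpolants_Kel)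
  fix p assume p: "p \<in> Oel e" and "dot y z \<le> p"
  then have "z \<le> ldiv_pi e ldiv y p" by (simp add: dot_le_iff)
  then obtain a b where ab: "y \<le> e a" "e b \<le> p" "z \<le> e (ldiv a b)"
    using Kel_le_ldiv_pi[OF y p z] by blast
  have "e (ldiv a b) \<le> ldiv_pi e ldiv (e a) (e b)"
    by (rule ldiv_pi_Kel_Oel_upper) simp_all
  then have "dot (e a) z \<le> e b" using ab(3) by (simp add: dot_le_iff)
  then have "dot y z \<le> e b" using dot_mono_left[OF ab(1)] by (rule order_trans[rotated])
  then show "\<exists>b. dot y z \<le> e b \<and> e b \<le> p" using ab(2) by blast
qed

lemma ldiv_pi_preserves_Oel_joins_if_splits:
  assumes split: "ldiv_splits_joins e ldiv"
  shows "ldiv_pi_preserves_Oel_joins e ldiv"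
  unfolding ldiv_pi_preserves_Oel_joins_def
proof (intro ballI antisym)
  fix x o1 o2 :: 'c assume x: "x \<in> Jinf" and o1: "o1 \<in> Oel e" and o2: "o2 \<in> Oel e"
  have xK: "x \<in> Kel e" using Jinf_Kel[OF x] .
  show "ldiv_pi e ldiv x (sup o1 o2) \<le> sup (ldiv_pi e ldiv x o1) (ldiv_pi e ldiv x o2)"
    unfolding ldiv_pi_Kel_Oel[OF xK sup_Oel[OF o1 o2]]
  proof (rule Sup_least)
    fix v assume "v \<in> e ` {ldiv a b |a b. x \<le> e a \<and> e b \<le> sup o1 o2}"
    then obtain a b where v: "v = e (ldiv a b)" and a: "x \<le> e a" and b: "e b \<le> sup o1 o2"
      by blast
    obtain j1 j2 where j: "e b \<le> sup (e j1) (e j2)" "e j1 \<le> o1" "e j2 \<le> o2"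
      using Kel_le_sup_Oel_split[OF e_Kel o1 o2 b] by blast
    obtain a' where a': "x \<le> e a'" "ldiv a (sup j1 j2) \<le> sup (ldiv a' j1) (ldiv a' j2)"
      using split x a unfolding ldiv_splits_joins_def by blast
    have "ldiv a b \<le> ldiv a (sup j1 j2)" using j(1) by (simp add: ldiv_mono flip: e_sup)
    then have "v \<le> sup (e (ldiv a' j1)) (e (ldiv a' j2))"
      unfolding v using a'(2) by (simp flip: e_sup)
    also have "\<dots> \<le> sup (ldiv_pi e ldiv x o1) (ldiv_pi e ldiv x o2)"
      using ldiv_pi_Kel_Oel_upper[OF xK] o1 o2 a'(1) j(2,3) by (blast intro: sup_mono)
    finally show "v \<le> sup (ldiv_pi e ldiv x o1) (ldiv_pi e ldiv x o2)" .
  qed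
  show "sup (ldiv_pi e ldiv x o1) (ldiv_pi e ldiv x o2) \<le> ldiv_pi e ldiv x (sup o1 o2)"
    by (simp add: ldiv_pi_mono)
qed

lemma ldiv_splits_joins_if_preserves:
  assumes preserve: "ldiv_pi_preserves_Oel_joins e ldiv"
  shows "ldiv_splits_joins e ldiv"
  unfolding ldiv_splits_joins_def
proof (intro allI impI)
  fix a b c and x :: 'c assume "x \<in> Jinf \<and> x \<le> e a"
  then have x: "x \<in> Jinf" "x \<le> e a" by simp_all
  have "e (ldiv a (sup b c)) \<le> ldiv_pi e ldiv x (e (sup b c))"
    using ldiv_pi_Kel_Oel_upper[OF Jinf_Kel[OF x(1)] e_Oel x(2)] by blast
  also have "\<dots> = sup (ldiv_pi e ldiv x (e b)) (ldiv_pi e ldiv x (e c))"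
    using preserve x(1) unfolding ldiv_pi_preserves_Oel_joins_def by simp
  finally show "\<exists>a'. x \<le> e a' \<and> ldiv a (sup b c) \<le> sup (ldiv a' b) (ldiv a' c)"
    by (rule e_le_sup_ldiv_pi[OF Jinf_Kel[OF x(1)]])
qed

lemma dual_functional_if_preserves:
  assumes preserve: "ldiv_pi_preserves_Oel_joins e ldiv"
  shows "dual_functional dot"
  unfolding dual_functional_def
proof (intro ballI)
  fix y z :: 'c assume y: "y \<in> Jinf" and z: "z \<in> Jinf"
  have "dot y z \<in> Jinf" if "dot y z \<noteq> bot"
    unfolding Jinf_iff
  proof (intro conjI allI impI that)
    show "dot y z \<in> Kel e" using dot_Kel Jinf_Kel y z by blast
    fix a b assume "dot y z \<le> sup (e a) (e b)"
    then have "z \<le> sup (ldiv_pi e ldiv y (e a)) (ldiv_pi e ldiv y (e b))"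
      using preserve y unfolding ldiv_pi_preserves_Oel_joins_def by (simp add: dot_le_iff)
    then show "dot y z \<le> e a \<or> dot y z \<le> e b"
      using Jinf_le_sup_Oel[OF z] ldiv_pi_Kel_Oel_in_Oel[OF Jinf_Kel[OF y] e_Oel]
      by (simp add: dot_le_iff)
  qed
  then show "dot y z \<in> Jinf \<union> {bot}" by blast
qed

lemma ldiv_splits_joins_if_dual_functional:
  assumes functional: "dual_functional dot"
  shows "ldiv_splits_joins e ldiv"
  unfolding ldiv_splits_joins_def
proof (intro allI impI)
  fix a b c and x :: 'c assume "x \<in> Jinf \<and> x \<le> e a"
  then have x: "x \<in> Jinf" "x \<le> e a" by simp_all
  have xK: "x \<in> Kel e" using Jinf_Kel[OF x(1)] .
  define P where "P = sup (ldiv_pi e ldiv x (e b)) (ldiv_pi e ldiv x (e c))"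
  have "e (ldiv a (sup b c)) \<le> P"
  proof (rule ccontr)
    assume "\<not> e (ldiv a (sup b c)) \<le> P"
    moreover have "P \<in> Oel e" unfolding P_def by (simp add: ldiv_pi_Kel_Oel_in_Oel[OF xK])
    ultimately obtain z where z: "z \<in> Jinf" "z \<le> e (ldiv a (sup b c))" "\<not> z \<le> P"
      using Jinf_separation by blast
    have "e (ldiv a (sup b c)) \<le> ldiv_pi e ldiv x (e (sup b c))"
      using ldiv_pi_Kel_Oel_upper[OF xK e_Oel x(2)] by blast
    then have "dot x z \<le> sup (e b) (e c)" using z(2) by (simp add: dot_le_iff order_trans)
    moreover have "dot x z \<in> Jinf \<or> dot x z = bot"
      using functional x(1) z(1) unfolding dual_functional_def by blast
    ultimately have "dot x z \<le> e b \<or> dot x z \<le> e c"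
      using Jinf_le_sup_e by auto
    then have "z \<le> P" unfolding P_def by (auto simp: dot_le_iff intro: le_supI1 le_supI2)
    with z(3) show False ..
  qed
  then show "\<exists>a'. x \<le> e a' \<and> ldiv a (sup b c) \<le> sup (ldiv a' b) (ldiv a' c)"
    unfolding P_def by (rule e_le_sup_ldiv_pi[OF xK])
qed

end

theorem proposition3p1:
  fixes ldiv rdiv :: "'a::{distrib_lattice,bounded_lattice} \<Rightarrow> 'a \<Rightarrow> 'a"
    and e :: "'a \<Rightarrow> 'c::complete_lattice"
    and dot :: "'c \<Rightarrow> 'c \<Rightarrow> 'c"
  assumes RA: "residuation_algebra ldiv rdiv"
    and CE: "canonical_extension e"
    and dot_adj: "\<And>u v w. (v \<le> ldiv_pi e ldiv u w \<longleftrightarrow> dot u v \<le> w)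
                          \<and> (dot u v \<le> w \<longleftrightarrow> u \<le> rdiv_pi e rdiv w v)"
  shows "((\<forall>y\<in>Jinf. \<forall>z\<in>Jinf. dot y z \<in> Jinf \<union> {bot})
          \<longleftrightarrow> (\<forall>a b c x. x \<in> Jinf \<and> x \<le> e a \<longrightarrow>
                 (\<exists>a'. x \<le> e a' \<and> ldiv a (sup b c) \<le> sup (ldiv a' b) (ldiv a' c))))
       \<and> ((\<forall>a b c x. x \<in> Jinf \<and> x \<le> e a \<longrightarrow>
                 (\<exists>a'. x \<le> e a' \<and> ldiv a (sup b c) \<le> sup (ldiv a' b) (ldiv a' c)))
          \<longleftrightarrow> (\<forall>x\<in>Jinf. \<forall>o1\<in>Oel e. \<forall>o2\<in>Oel e.
                 ldiv_pi e ldiv x (sup o1 o2) = sup (ldiv_pi e ldiv x o1) (ldiv_pi e ldiv x o2)))"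
proof -
  interpret residuated_canonical_ext e ldiv rdiv dot
    by unfold_locales (fact CE RA dot_adj)+
  have "dual_functional dot \<longleftrightarrow> ldiv_splits_joins e ldiv"
    using ldiv_splits_joins_if_dual_functional dual_functional_if_preserves
      ldiv_pi_preserves_Oel_joins_if_splits by blast
  moreover have "ldiv_splits_joins e ldiv \<longleftrightarrow> ldiv_pi_preserves_Oel_joins e ldiv"
    using ldiv_pi_preserves_Oel_joins_if_splits ldiv_splits_joins_if_preserves by blast
  ultimately show ?thesis
    unfolding dual_functional_def ldiv_splits_joins_def ldiv_pi_preserves_Oel_joins_def
    by (rule conjI)
qed

end
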